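(* For all positive integers $n,k$ and every probability distribution $P=(p_1,\dots,p_k)$ on $\{1,\dots,k\}$, it holds that $\|2nV_{n,k,P}\|_{\psi_1}\leq 4(k-1)$ and $\|2nV_{n,k,P}-\mathbb{E}[2nV_{n,k,P}]\|_{\psi_1}\leq 8(k-1)$. In particular, there exist universal constants $C_1,C_2>0$ such that for all $n$, $k$, $P$ and all real $m\geq 1$, \[ \mathbb{E}\big[(2nV_{n,k,P})^m\big]\leq (C_1m(k-1))^m,\qquad \mathbb{E}\big[(2nV_{n,k,P}-\mathbb{E}[2nV_{n,k,P}])^m\big]\leq (C_2m(k-1))^m. \]
   Context: $X=(X_1,\dots,X_k)$ is multinomially distributed with $n$ samples and probabilities $P$, and $V_{n,k,P}=D\big((X_1/n,\dots,X_k/n)\,\|\,(p_1,\dots,p_k)\big)$ where $D\big((q_i)_i\,\|\,(p_i)_i\big)=\sum_i q_i\log\frac{q_i}{p_i}$ is the Kullback--Leibler divergence (natural logarithm, convention $0\log(0/p)=0$). For a real random variable $Y$, the subexponential norm is $\|Y\|_{\psi_1}=\inf\{t>0:\mathbb{E}[\exp(|Y|/t)]\leq 2\}$. *)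

theory Defs
  imports "HOL-Analysis.Analysis"
begin

text \<open>Outcomes of a multinomial experiment with n samples and k categories
  (categories indexed 0..k-1): count vectors summing to n.\<close>
definition count_vecs :: "nat \<Rightarrow> nat \<Rightarrow> (nat \<Rightarrow> nat) set" where
  "count_vecs n k = {x \<in> {0..<k} \<rightarrow>\<^sub>E {0..n}. (\<Sum>i<k. x i) = n}"

definition multinomial_pmf :: "nat \<Rightarrow> nat \<Rightarrow> (nat \<Rightarrow> real) \<Rightarrow> (nat \<Rightarrow> nat) \<Rightarrow> real" where
  "multinomial_pmf n k p x = fact n / (\<Prod>i<k. fact (x i)) * (\<Prod>i<k. p i ^ x i)"

definition mult_expect :: "nat \<Rightarrow> nat \<Rightarrow> (nat \<Rightarrow> real) \<Rightarrow> ((nat \<Rightarrow> nat) \<Rightarrow> real) \<Rightarrow> real" where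
  "mult_expect n k p f = (\<Sum>x\<in>count_vecs n k. multinomial_pmf n k p x * f x)"

definition KL_div :: "nat \<Rightarrow> (nat \<Rightarrow> real) \<Rightarrow> (nat \<Rightarrow> real) \<Rightarrow> real" where
  "KL_div k q p = (\<Sum>i<k. if q i = 0 then 0 else q i * ln (q i / p i))"

definition V_stat :: "nat \<Rightarrow> nat \<Rightarrow> (nat \<Rightarrow> real) \<Rightarrow> (nat \<Rightarrow> nat) \<Rightarrow> real" where
  "V_stat n k p x = KL_div k (\<lambda>i. real (x i) / real n) p"

definition psi1_norm :: "nat \<Rightarrow> nat \<Rightarrow> (nat \<Rightarrow> real) \<Rightarrow> ((nat \<Rightarrow> nat) \<Rightarrow> real) \<Rightarrow> real" where
  "psi1_norm n k p Y = Inf {t. t > 0 \<and> mult_expect n k p (\<lambda>x. exp (\<bar>Y x\<bar> / t)) \<le> 2}"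

definition prob_vec :: "nat \<Rightarrow> (nat \<Rightarrow> real) \<Rightarrow> bool" where
  "prob_vec k p \<longleftrightarrow> (\<forall>i<k. p i \<ge> 0) \<and> (\<Sum>i<k. p i) = 1"

end

theory Submission
  imports Defs
begin

text \<open>Everything rests on the moment generating function bound
  \<open>E exp (n V / (2 (k - 1))) \<le> 2\<close>, proved by induction on \<open>k\<close>. Splitting off the last
  category writes \<open>n V\<close> as the binomial log-likelihood ratio of the last count plus the
  statistic of the remaining counts under the renormalised distribution. Convexity of \<open>exp\<close>
  with weights \<open>1/k\<close> and \<open>(k-1)/k\<close> separates the two terms: the second is covered by the
  induction hypothesis, and the first is a binomial sum which, after AM-GM, Abel's identity
  evaluates to at most \<open>2\<close>. Centering costs a factor \<open>2\<close> by Jensen's inequality, and the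
  moment bounds follow from \<open>y^m \<le> (t m)^m e^-m e^(y/t)\<close>.\<close>

section \<open>Finite differences of powers and Abel's identity\<close>

lemma sum_alternating_binomial_Suc:
  fixes a :: "nat \<Rightarrow> 'a::comm_ring_1"
  shows "(\<Sum>k\<le>Suc n. (-1)^k * of_nat (Suc n choose k) * a k)
       = (\<Sum>k\<le>n. (-1)^k * of_nat (n choose k) * a k) - (\<Sum>k\<le>n. (-1)^k * of_nat (n choose k) * a (Suc k))"
proof -
  have "(\<Sum>k\<le>Suc n. (-1)^k * of_nat (Suc n choose k) * a k)
      = a 0 + (\<Sum>k\<le>n. (-1)^(Suc k) * of_nat (Suc n choose Suc k) * a (Suc k))"
    by (subst sum.atMost_Suc_shift) simp
  also have "\<dots> = a 0 + (\<Sum>k\<le>n. (-1)^(Suc k) * of_nat (n choose Suc k) * a (Suc k))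
                 - (\<Sum>k\<le>n. (-1)^k * of_nat (n choose k) * a (Suc k))"
    by (simp add: sum.distrib sum_subtractf algebra_simps sum_negf)
  also have "a 0 + (\<Sum>k\<le>n. (-1)^(Suc k) * of_nat (n choose Suc k) * a (Suc k))
           = (\<Sum>k\<le>Suc n. (-1)^k * of_nat (n choose k) * a k)"
    by (subst sum.atMost_Suc_shift) simp
  also have "\<dots> = (\<Sum>k\<le>n. (-1)^k * of_nat (n choose k) * a k)"
    by (simp add: binomial_eq_0)
  finally show ?thesis .
qed

text \<open>Up to the sign \<open>(-1)^n\<close>, this is the \<open>n\<close>-th forward difference of \<open>t^m\<close> at \<open>x\<close>.\<close>
definition alt_binomial_pow_sum :: "nat \<Rightarrow> nat \<Rightarrow> real \<Rightarrow> real" where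
  "alt_binomial_pow_sum n m x = (\<Sum>k\<le>n. (-1)^k * real (n choose k) * (x + real k)^m)"

lemma alt_binomial_pow_sum_Suc:
  "alt_binomial_pow_sum (Suc n) m x = alt_binomial_pow_sum n m x - alt_binomial_pow_sum n m (x + 1)"
  unfolding alt_binomial_pow_sum_def by (subst sum_alternating_binomial_Suc) (simp add: algebra_simps)

lemma alt_binomial_pow_sum_shift:
  "alt_binomial_pow_sum n m (x + 1) - alt_binomial_pow_sum n m x
     = (\<Sum>i<m. real (m choose i) * alt_binomial_pow_sum n i x)"
proof -
  have binomial: "(x + real k + 1)^m - (x + real k)^m = (\<Sum>i<m. real (m choose i) * (x + real k)^i)" for k
    using binomial_ring[of "x + real k" 1 m] by (simp add: lessThan_Suc_atMost[symmetric] mult.commute)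
  have "alt_binomial_pow_sum n m (x + 1) - alt_binomial_pow_sum n m x
      = (\<Sum>k\<le>n. (-1)^k * real (n choose k) * ((x + real k + 1)^m - (x + real k)^m))"
    unfolding alt_binomial_pow_sum_def by (simp add: sum_subtractf algebra_simps)
  also have "\<dots> = (\<Sum>k\<le>n. (-1)^k * real (n choose k) * (\<Sum>i<m. real (m choose i) * (x + real k)^i))"
    by (simp only: binomial)
  also have "\<dots> = (\<Sum>i<m. real (m choose i) * alt_binomial_pow_sum n i x)"
    unfolding alt_binomial_pow_sum_def
    by (simp add: sum_distrib_left sum_distrib_right algebra_simps sum.swap[of _ "{..n}"])
  finally show ?thesis .
qed

lemma alt_binomial_pow_sum_eq:
  "m \<le> n \<Longrightarrow> alt_binomial_pow_sum n m x = (if m = n then (-1)^n * fact n else 0)"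
proof (induction n arbitrary: m x)
  case 0
  then show ?case by (simp add: alt_binomial_pow_sum_def)
next
  case (Suc n)
  have "alt_binomial_pow_sum (Suc n) m x = - (\<Sum>i<m. real (m choose i) * alt_binomial_pow_sum n i x)"
    using alt_binomial_pow_sum_Suc[of n m x] alt_binomial_pow_sum_shift[of n m x] by simp
  also have "\<dots> = - (\<Sum>i<m. if i = n then real (m choose n) * (-1)^n * fact n else 0)"
    using Suc by (intro arg_cong[of _ _ uminus] sum.cong) auto
  also have "\<dots> = (if m = Suc n then (-1)^Suc n * fact (Suc n) else 0)"
    using Suc.prems by (auto simp: lessThan_Suc_atMost[symmetric] algebra_simps)
  finally show ?case .
qed

definition abel_sum :: "nat \<Rightarrow> real \<Rightarrow> real \<Rightarrow> real" where
  "abel_sum n x y = (\<Sum>k\<le>n. real (n choose k) * (x + real k)^k * (y + real (n - k))^(n - k))"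

definition abel_fact_sum :: "nat \<Rightarrow> real \<Rightarrow> real" where
  "abel_fact_sum n s = (\<Sum>k\<le>n. real (n choose k) * fact k * s^(n - k))"

lemma has_real_derivative_binomial_power_sum:
  "((\<lambda>y. \<Sum>k\<le>Suc n. real (Suc n choose k) * a k * (y + c k)^(Suc n - k)) has_real_derivative
     real (Suc n) * (\<Sum>k\<le>n. real (n choose k) * a k * (y + c k)^(n - k))) (at y)"
proof -
  have absorb: "real (Suc n - k) * real (Suc n choose k) = real (Suc n) * real (n choose k)" for k
    using binomial_absorb_comp[of "Suc n" k] by (metis diff_Suc_1 of_nat_mult)
  have "((\<lambda>y. \<Sum>k\<le>Suc n. real (Suc n choose k) * a k * (y + c k)^(Suc n - k)) has_real_derivative
     (\<Sum>k\<le>Suc n. real (Suc n - k) * real (Suc n choose k) * (a k * (y + c k)^(n - k)))) (at y)"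
    by (rule DERIV_sum) (auto intro!: derivative_eq_intros)
  moreover have "(\<Sum>k\<le>Suc n. real (Suc n - k) * real (Suc n choose k) * (a k * (y + c k)^(n - k)))
      = real (Suc n) * (\<Sum>k\<le>n. real (n choose k) * a k * (y + c k)^(n - k))"
    by (simp add: absorb sum_distrib_left mult.assoc del: of_nat_diff)
  ultimately show ?thesis by simp
qed

lemma abel_sum_anchor: "abel_sum n x (- x - real n) = fact n"
proof -
  have "abel_sum n x (- x - real n) = (-1)^n * alt_binomial_pow_sum n n x"
    unfolding abel_sum_def alt_binomial_pow_sum_def sum_distrib_left
  proof (rule sum.cong[OF refl])
    fix k assume "k \<in> {..n}"
    then have k: "k \<le> n" by simp
    have base: "- x - real n + real (n - k) = - (x + real k)" using k by (simp add: of_nat_diff)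
    have pow: "(x + real k)^k * (x + real k)^(n - k) = (x + real k)^n"
      using k by (simp flip: power_add)
    have sign: "(-1::real)^(n - k) = (-1)^n * (-1)^k"
      using k by (simp add: minus_one_power_iff)
    have "real (n choose k) * (x + real k)^k * (- x - real n + real (n - k))^(n - k)
        = real (n choose k) * ((-1)^(n - k) * ((x + real k)^k * (x + real k)^(n - k)))"
      unfolding base power_minus[of "x + real k"] by (simp only: mult_ac)
    also have "\<dots> = (-1)^n * ((-1)^k * real (n choose k) * (x + real k)^n)"
      unfolding pow sign by (simp only: mult_ac)
    finally show "real (n choose k) * (x + real k)^k * (- x - real n + real (n - k))^(n - k)
        = (-1)^n * ((-1)^k * real (n choose k) * (x + real k)^n)" .
  qed
  then show ?thesis by (simp add: alt_binomial_pow_sum_eq)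
qed

lemma abel_fact_sum_0: "abel_fact_sum n 0 = fact n"
proof -
  have "abel_fact_sum n 0 = (\<Sum>k\<le>n. if k = n then fact n else 0)"
    unfolding abel_fact_sum_def by (rule sum.cong) auto
  then show ?thesis by simp
qed

text \<open>Abel's binomial identity, proved by differentiating in \<open>y\<close>: both sides then satisfy the
  same recursion in \<open>n\<close>, and they agree at \<open>y = -x-n\<close> by the forward difference formula.\<close>
lemma abel_identity: "abel_sum n x y = abel_fact_sum n (x + y + real n)"
proof (induction n arbitrary: y)
  case 0
  then show ?case by (simp add: abel_sum_def abel_fact_sum_def)
next
  case (Suc n)
  define h where "h y = abel_sum (Suc n) x y - abel_fact_sum (Suc n) (x + y + real (Suc n))" for y
  have fact_deriv: "(abel_fact_sum (Suc n) has_real_derivative real (Suc n) * abel_fact_sum n s) (at s)" for s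
    using has_real_derivative_binomial_power_sum[of n fact "\<lambda>_. 0" s]
    by (simp only: add_0_right abel_fact_sum_def[abs_def])
  have "(h has_real_derivative 0) (at y)" for y
  proof -
    have "abel_sum n x (y + 1)
        = (\<Sum>k\<le>n. real (n choose k) * (x + real k)^k * (y + real (Suc n - k))^(n - k))"
      unfolding abel_sum_def by (intro sum.cong) (auto simp: Suc_diff_le add.assoc)
    then have "((\<lambda>y. abel_sum (Suc n) x y) has_real_derivative real (Suc n) * abel_sum n x (y + 1)) (at y)"
      using has_real_derivative_binomial_power_sum[of n "\<lambda>k. (x + real k)^k" "\<lambda>k. real (Suc n - k)" y]
      by (simp only: abel_sum_def)
    moreover have "((\<lambda>y. abel_fact_sum (Suc n) (x + y + real (Suc n))) has_real_derivative
        real (Suc n) * abel_fact_sum n (x + y + real (Suc n)) * 1) (at y)"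
      by (rule DERIV_chain2[OF fact_deriv]) (auto intro!: derivative_eq_intros)
    ultimately have "(h has_real_derivative
        real (Suc n) * abel_sum n x (y + 1) - real (Suc n) * abel_fact_sum n (x + y + real (Suc n)) * 1) (at y)"
      unfolding h_def by (rule DERIV_diff)
    then show ?thesis using Suc.IH[of "y + 1"] by (simp add: algebra_simps)
  qed
  then have "h y = h (- x - real (Suc n))" by (intro DERIV_isconst_all) auto
  also have "\<dots> = 0" unfolding h_def using abel_sum_anchor[of "Suc n" x] abel_fact_sum_0[of "Suc n"] by simp
  finally show ?case unfolding h_def by simp
qed

lemma abel_fact_sum_le: "abel_fact_sum n (2 * real n) \<le> 2 * (2 * real n)^n"
proof -
  have "abel_fact_sum n (2 * real n) \<le> (\<Sum>k\<le>n. (2 * real n)^n * (1/2)^k)"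
    unfolding abel_fact_sum_def
  proof (rule sum_mono)
    fix k assume "k \<in> {..n}"
    then have split: "(2 * real n)^n = (2 * real n)^k * (2 * real n)^(n - k)"
      by (metis atMost_iff le_add_diff_inverse power_add)
    have "real (n choose k) * fact k \<le> real n ^ k"
      using binomial_fact_pow[of n k] by (metis of_nat_fact of_nat_le_iff of_nat_mult of_nat_power)
    then have "real (n choose k) * fact k * (2 * real n)^(n - k) \<le> real n ^ k * (2 * real n)^(n - k)"
      by (rule mult_right_mono) simp
    also have "\<dots> = (2 * real n)^n * (1/2)^k"
      unfolding split by (simp add: power_mult_distrib field_simps)
    finally show "real (n choose k) * fact k * (2 * real n)^(n - k) \<le> (2 * real n)^n * (1/2)^k" .
  qed
  also have "\<dots> = (2 * real n)^n * (\<Sum>k<Suc n. (1/2)^k)"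
    by (simp add: sum_distrib_left lessThan_Suc_atMost)
  also have "(\<Sum>k<Suc n. (1/2::real)^k) \<le> 2"
    by (subst geometric_sum) (auto simp: field_simps)
  then have "(2 * real n)^n * (\<Sum>k<Suc n. (1/2::real)^k) \<le> (2 * real n)^n * 2"
    by (rule mult_left_mono) simp
  finally show ?thesis by simp
qed

section \<open>The binomial case\<close>

definition kl_term :: "real \<Rightarrow> real \<Rightarrow> real" where
  "kl_term a b = (if a = 0 then 0 else a * ln (a / b))"

lemma kl_term_0 [simp]: "kl_term 0 b = 0"
  by (simp add: kl_term_def)

lemma kl_term_change_base:
  assumes "0 < a" "0 < b" "0 < c"
  shows "kl_term a b = kl_term a c + a * ln (c / b)"
proof -
  have "ln (a / b) = ln (a / c) + ln (c / b)" using assms by (simp add: ln_div)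
  then show ?thesis using assms by (simp add: kl_term_def algebra_simps)
qed

text \<open>AM-GM: the left-hand side equals \<open>(a * sqrt (j / (n * a)))^j = sqrt (a * j / n)^j\<close>.\<close>
lemma pow_mult_exp_half_kl_term_le:
  assumes a: "0 \<le> a" and jn: "j \<le> n"
  shows "a^j * exp (kl_term (real j) (real n * a) / 2) \<le> ((real n * a + real j) / (2 * real n))^j"
proof (cases "j = 0 \<or> a = 0")
  case True
  then show ?thesis using a by (auto simp: kl_term_def zero_power)
next
  case False
  then have j: "0 < j" and ap: "0 < a" using a by auto
  then have n: "0 < n" using jn by simp
  define z where "z = real j / (real n * a)"
  have z: "0 < z" unfolding z_def using j ap n by simp
  have "exp (kl_term (real j) (real n * a) / 2) = exp (ln z / 2) ^ j"
    using j by (simp add: kl_term_def z_def flip: exp_of_nat_mult)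
  also have "exp (ln z / 2) = sqrt z"
    using z by (simp add: powr_half_sqrt[symmetric] powr_def)
  finally have "a^j * exp (kl_term (real j) (real n * a) / 2) = (a * sqrt z)^j"
    by (simp add: power_mult_distrib)
  also have "a * sqrt z = sqrt (a * (real j / real n))"
    using ap n by (simp add: z_def real_sqrt_mult real_sqrt_divide field_simps)
  also have "(sqrt (a * (real j / real n)))^j \<le> ((a + real j / real n) / 2)^j"
    by (intro power_mono arith_geo_mean_sqrt) (use ap in auto)
  also have "(a + real j / real n) / 2 = (real n * a + real j) / (2 * real n)"
    using n by (simp add: field_simps)
  finally show ?thesis .
qed

lemma binomial_term_exp_kl_term_le:
  assumes r: "0 \<le> r" "r \<le> 1" and j: "j \<le> n"
  shows "r^j * (1 - r)^(n - j)
           * exp ((kl_term (real j) (real n * r) + kl_term (real (n - j)) (real n * (1 - r))) / 2)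
      \<le> ((real n * r + real j) / (2 * real n))^j * ((real n * (1 - r) + real (n - j)) / (2 * real n))^(n - j)"
proof -
  have "r^j * (1 - r)^(n - j)
           * exp ((kl_term (real j) (real n * r) + kl_term (real (n - j)) (real n * (1 - r))) / 2)
      = (r^j * exp (kl_term (real j) (real n * r) / 2))
        * ((1 - r)^(n - j) * exp (kl_term (real (n - j)) (real n * (1 - r)) / 2))"
    by (simp add: add_divide_distrib exp_add mult_ac)
  also have "\<dots> \<le> ((real n * r + real j) / (2 * real n))^j
                  * ((real n * (1 - r) + real (n - j)) / (2 * real n))^(n - j)"
    using r j by (intro mult_mono pow_mult_exp_half_kl_term_le) auto
  finally show ?thesis .
qed

text \<open>The exponent is \<open>n\<close> times the divergence of \<open>(j/n, 1 - j/n)\<close> from \<open>(r, 1 - r)\<close>.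
  After AM-GM in each factor, Abel's identity evaluates the resulting sum exactly.\<close>
lemma binomial_exp_kl_term_le:
  assumes r: "0 \<le> r" "r \<le> 1"
  shows "(\<Sum>j\<le>n. real (n choose j) * r^j * (1 - r)^(n - j)
           * exp ((kl_term (real j) (real n * r) + kl_term (real (n - j)) (real n * (1 - r))) / 2)) \<le> 2"
proof (cases "n = 0")
  case True
  then show ?thesis by simp
next
  case False
  then have n: "0 < n" by simp
  have "(\<Sum>j\<le>n. real (n choose j) * r^j * (1 - r)^(n - j)
           * exp ((kl_term (real j) (real n * r) + kl_term (real (n - j)) (real n * (1 - r))) / 2))
     \<le> (\<Sum>j\<le>n. real (n choose j) * ((real n * r + real j) / (2 * real n))^j
                  * ((real n * (1 - r) + real (n - j)) / (2 * real n))^(n - j))"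
    using binomial_term_exp_kl_term_le[OF r] by (intro sum_mono) (simp add: mult.assoc mult_left_mono)
  also have "\<dots> = abel_sum n (real n * r) (real n * (1 - r)) / (2 * real n)^n"
    unfolding abel_sum_def sum_divide_distrib
  proof (rule sum.cong[OF refl])
    fix j assume "j \<in> {..n}"
    then have "(2 * real n)^n = (2 * real n)^j * (2 * real n)^(n - j)"
      by (metis atMost_iff le_add_diff_inverse power_add)
    then show "real (n choose j) * ((real n * r + real j) / (2 * real n))^j
                  * ((real n * (1 - r) + real (n - j)) / (2 * real n))^(n - j)
         = real (n choose j) * (real n * r + real j)^j * (real n * (1 - r) + real (n - j))^(n - j)
             / (2 * real n)^n"
      by (simp add: power_divide)
  qed
  also have "\<dots> = abel_fact_sum n (2 * real n) / (2 * real n)^n"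
    by (simp add: abel_identity algebra_simps)
  also have "\<dots> \<le> 2"
    using abel_fact_sum_le[of n] n by (simp add: divide_le_eq)
  finally show ?thesis .
qed

section \<open>Count vectors and the multinomial distribution\<close>

lemma finite_count_vecs: "finite (count_vecs n k)"
  unfolding count_vecs_def by (rule finite_subset[OF _ finite_PiE[of "{0..<k}" "\<lambda>_. {0..n}"]]) auto

lemma count_vecs_le: "x \<in> count_vecs n k \<Longrightarrow> i < k \<Longrightarrow> x i \<le> n"
  unfolding count_vecs_def by (auto simp: PiE_iff)

lemma count_vecs_sum: "x \<in> count_vecs n k \<Longrightarrow> (\<Sum>i<k. x i) = n"
  unfolding count_vecs_def by simp

lemma count_vecs_undefined: "x \<in> count_vecs n k \<Longrightarrow> k \<le> i \<Longrightarrow> x i = undefined"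
  unfolding count_vecs_def by (auto simp: PiE_iff extensional_def)

lemma count_vecs_Suc:
  "count_vecs n (Suc k) = (\<lambda>(j, x'). x'(k := j)) ` (SIGMA j:{..n}. count_vecs (n - j) k)"
proof (intro equalityI subsetI)
  fix x assume x: "x \<in> count_vecs n (Suc k)"
  define x' where "x' = x(k := undefined)"
  have sum_x: "(\<Sum>i<k. x i) + x k = n" using count_vecs_sum[OF x] by simp
  have "x' \<in> count_vecs (n - x k) k"
  proof -
    have "x' i \<le> n - x k" if "i < k" for i
    proof -
      have "x i \<le> (\<Sum>i<k. x i)" using that by (intro member_le_sum) auto
      then show ?thesis using sum_x that unfolding x'_def by simp
    qed
    moreover have "x' i = undefined" if "i \<notin> {0..<k}" for i
      using that count_vecs_undefined[OF x, of i] unfolding x'_def by (cases "i = k") auto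
    moreover have "(\<Sum>i<k. x' i) = (\<Sum>i<k. x i)" unfolding x'_def by (rule sum.cong) auto
    ultimately show ?thesis using sum_x unfolding count_vecs_def by (auto simp: PiE_iff extensional_def)
  qed
  moreover have "x k \<le> n" using count_vecs_le[OF x, of k] by simp
  moreover have "x = x'(k := x k)" unfolding x'_def by simp
  ultimately show "x \<in> (\<lambda>(j, x'). x'(k := j)) ` (SIGMA j:{..n}. count_vecs (n - j) k)"
    by (intro image_eqI[where x = "(x k, x')"]) auto
next
  fix x assume "x \<in> (\<lambda>(j, x'). x'(k := j)) ` (SIGMA j:{..n}. count_vecs (n - j) k)"
  then obtain j x' where j: "j \<le> n" and x': "x' \<in> count_vecs (n - j) k" and x: "x = x'(k := j)"
    by auto
  have "(\<Sum>i<Suc k. x i) = n"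
    using count_vecs_sum[OF x'] j unfolding x by (simp add: lessThan_Suc)
  moreover have "x i \<le> n" if "i < Suc k" for i
    using that count_vecs_le[OF x', of i] j unfolding x by (cases "i = k") auto
  moreover have "x i = undefined" if "Suc k \<le> i" for i
    using that count_vecs_undefined[OF x', of i] unfolding x by auto
  ultimately show "x \<in> count_vecs n (Suc k)" unfolding count_vecs_def
    by (auto simp: PiE_iff extensional_def)
qed

lemma inj_on_count_vecs_Suc: "inj_on (\<lambda>(j, x'). x'(k := j)) (SIGMA j:{..n}. count_vecs (n - j) k)"
proof (rule inj_onI, clarify)
  fix j x' j' y'
  assume x': "x' \<in> count_vecs (n - j) k" and y': "y' \<in> count_vecs (n - j') k"
    and eq: "x'(k := j) = y'(k := j')"
  have "x' i = y' i" for i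
    using fun_cong[OF eq, of i] count_vecs_undefined[OF x', of k] count_vecs_undefined[OF y', of k]
    by (cases "i = k") auto
  then show "j = j' \<and> x' = y'" using fun_cong[OF eq, of k] by auto
qed

lemma sum_count_vecs_Suc:
  "(\<Sum>x\<in>count_vecs n (Suc k). f x) = (\<Sum>j\<le>n. \<Sum>x'\<in>count_vecs (n - j) k. f (x'(k := j)))"
  unfolding count_vecs_Suc sum.reindex[OF inj_on_count_vecs_Suc]
  by (subst sum.Sigma) (auto simp: finite_count_vecs split_def)

lemma multinomial_pmf_fun_upd:
  assumes "j \<le> n"
  shows "multinomial_pmf n (Suc k) p (x'(k := j))
       = real (n choose j) * p k ^ j * multinomial_pmf (n - j) k p x'"
proof -
  have "(\<Prod>i<Suc k. fact ((x'(k := j)) i) :: real) = (\<Prod>i<k. fact (x' i)) * fact j"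
    by (simp add: lessThan_Suc)
  moreover have "(\<Prod>i<Suc k. p i ^ (x'(k := j)) i) = (\<Prod>i<k. p i ^ x' i) * p k ^ j"
    by (simp add: lessThan_Suc)
  moreover have "(\<Prod>i<k. fact (x' i) :: real) \<noteq> 0" by simp
  ultimately show ?thesis
    unfolding multinomial_pmf_def binomial_fact[OF assms] by (simp add: field_simps)
qed

lemma sum_multinomial_pmf: "(\<Sum>x\<in>count_vecs n k. multinomial_pmf n k p x) = (\<Sum>i<k. p i)^n"
proof (induction k arbitrary: n)
  case 0
  then show ?case by (cases n) (simp_all add: count_vecs_def multinomial_pmf_def)
next
  case (Suc k)
  have "(\<Sum>x\<in>count_vecs n (Suc k). multinomial_pmf n (Suc k) p x)
      = (\<Sum>j\<le>n. real (n choose j) * p k ^ j * (\<Sum>x'\<in>count_vecs (n - j) k. multinomial_pmf (n - j) k p x'))"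
    by (simp add: sum_count_vecs_Suc multinomial_pmf_fun_upd sum_distrib_left)
  also have "\<dots> = (p k + (\<Sum>i<k. p i))^n"
    by (simp add: Suc.IH binomial_ring)
  finally show ?case by (simp add: add.commute)
qed

lemma multinomial_pmf_nonneg: "(\<And>i. i < k \<Longrightarrow> 0 \<le> p i) \<Longrightarrow> 0 \<le> multinomial_pmf n k p x"
  unfolding multinomial_pmf_def by (auto intro!: mult_nonneg_nonneg prod_nonneg divide_nonneg_nonneg)

lemma multinomial_pmf_eq_0:
  assumes "i < k" "x i \<noteq> 0" "p i = 0"
  shows "multinomial_pmf n k p x = 0"
proof -
  have "(\<Prod>i<k. p i ^ x i) = 0" using assms by (intro prod_zero) auto
  then show ?thesis by (simp add: multinomial_pmf_def)
qed

lemma multinomial_pmf_cong: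
  assumes "\<And>i. i < k \<Longrightarrow> p i = q i"
  shows "multinomial_pmf n k p x = multinomial_pmf n k q x"
proof -
  have "(\<Prod>i<k. p i ^ x i) = (\<Prod>i<k. q i ^ x i)" using assms by (intro prod.cong) auto
  then show ?thesis by (simp add: multinomial_pmf_def)
qed

lemma multinomial_pmf_scale:
  assumes "x \<in> count_vecs n k"
  shows "multinomial_pmf n k (\<lambda>i. c * p i) x = c^n * multinomial_pmf n k p x"
proof -
  have "(\<Prod>i<k. (c * p i) ^ x i) = c ^ (\<Sum>i<k. x i) * (\<Prod>i<k. p i ^ x i)"
    by (simp add: power_mult_distrib prod.distrib power_sum)
  then show ?thesis unfolding multinomial_pmf_def count_vecs_sum[OF assms] by (simp add: mult_ac)
qed

lemma prob_vec_SucD: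
  assumes "prob_vec (Suc k) p"
  shows "\<And>i. i < Suc k \<Longrightarrow> 0 \<le> p i" "(\<Sum>i<k. p i) = 1 - p k" "p k \<le> 1"
proof -
  show nonneg: "\<And>i. i < Suc k \<Longrightarrow> 0 \<le> p i" using assms by (simp add: prob_vec_def)
  show sum: "(\<Sum>i<k. p i) = 1 - p k" using assms by (simp add: prob_vec_def)
  have "0 \<le> (\<Sum>i<k. p i)" using nonneg by (intro sum_nonneg) auto
  then show "p k \<le> 1" using sum by simp
qed

lemma prob_vec_rescale:
  assumes "prob_vec (Suc k) p" "p k < 1"
  shows "prob_vec k (\<lambda>i. p i / (1 - p k))"
  using prob_vec_SucD[OF assms(1)] assms(2)
  unfolding prob_vec_def by (auto simp flip: sum_divide_distrib)

lemma mult_expect_const: "prob_vec k p \<Longrightarrow> mult_expect n k p (\<lambda>_. c) = c"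
  unfolding mult_expect_def prob_vec_def by (simp flip: sum_distrib_right add: sum_multinomial_pmf)

lemma mult_expect_cmult: "mult_expect n k p (\<lambda>x. c * f x) = c * mult_expect n k p f"
  unfolding mult_expect_def sum_distrib_left by (simp add: mult_ac)

lemma mult_expect_mono:
  assumes "prob_vec k p"
    and "\<And>x. x \<in> count_vecs n k \<Longrightarrow> multinomial_pmf n k p x \<noteq> 0 \<Longrightarrow> f x \<le> g x"
  shows "mult_expect n k p f \<le> mult_expect n k p g"
  unfolding mult_expect_def
proof (rule sum_mono)
  fix x assume "x \<in> count_vecs n k"
  then show "multinomial_pmf n k p x * f x \<le> multinomial_pmf n k p x * g x"
    using assms multinomial_pmf_nonneg[of k p n x]
    by (cases "multinomial_pmf n k p x = 0") (auto simp: prob_vec_def intro: mult_left_mono)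
qed

lemma mult_expect_convex_le:
  assumes "prob_vec k p" "convex_on UNIV f"
  shows "f (mult_expect n k p Y) \<le> mult_expect n k p (\<lambda>x. f (Y x))"
proof -
  have "(\<Sum>x\<in>count_vecs n k. multinomial_pmf n k p x) = 1"
    using assms(1) by (simp add: sum_multinomial_pmf prob_vec_def)
  then have "count_vecs n k \<noteq> {}" by auto
  then show ?thesis
    using convex_on_sum[OF finite_count_vecs _ assms(2), where a = "multinomial_pmf n k p" and y = Y] assms(1)
    by (simp add: mult_expect_def sum_multinomial_pmf multinomial_pmf_nonneg prob_vec_def)
qed

section \<open>The divergence statistic\<close>

lemma n_V_stat_eq_sum_kl_term:
  "0 < n \<Longrightarrow> real n * V_stat n k p x = (\<Sum>i<k. kl_term (real (x i)) (real n * p i))"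
  unfolding V_stat_def KL_div_def kl_term_def sum_distrib_left by (rule sum.cong) auto

lemma KL_div_nonneg:
  assumes p: "\<And>i. i < k \<Longrightarrow> 0 \<le> p i" and q: "\<And>i. i < k \<Longrightarrow> 0 \<le> q i"
    and mass: "(\<Sum>i<k. p i) \<le> (\<Sum>i<k. q i)"
    and support: "\<And>i. i < k \<Longrightarrow> q i \<noteq> 0 \<Longrightarrow> p i \<noteq> 0"
  shows "0 \<le> KL_div k q p"
proof -
  have "(\<Sum>i<k. q i - p i) \<le> KL_div k q p"
    unfolding KL_div_def
  proof (rule sum_mono)
    fix i assume "i \<in> {..<k}"
    then have i: "i < k" by simp
    show "q i - p i \<le> (if q i = 0 then 0 else q i * ln (q i / p i))"
    proof (cases "q i = 0")
      case False
      then have "0 < q i" "0 < p i" using p q support i by (auto simp: order.strict_iff_order)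
      moreover from this have "ln (p i / q i) \<le> p i / q i - 1" by (intro ln_le_minus_one) simp
      ultimately have "q i * (1 - p i / q i) \<le> q i * ln (q i / p i)"
        by (simp add: ln_div mult_left_mono)
      moreover have "q i * (1 - p i / q i) = q i - p i" using \<open>0 < q i\<close> by (simp add: field_simps)
      ultimately show ?thesis using False by simp
    qed (use p i in simp)
  qed
  then show ?thesis using mass by (simp add: sum_subtractf)
qed

lemma V_stat_nonneg:
  assumes pv: "prob_vec k p" and x: "x \<in> count_vecs n k" and nz: "multinomial_pmf n k p x \<noteq> 0"
  shows "0 \<le> V_stat n k p x"
proof (cases "n = 0")
  case True
  then show ?thesis by (simp add: V_stat_def KL_div_def)
next
  case False
  have "(\<Sum>i<k. real (x i) / real n) = 1"
    using count_vecs_sum[OF x] False by (simp flip: sum_divide_distrib of_nat_sum)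
  moreover have "p i \<noteq> 0" if "i < k" "real (x i) / real n \<noteq> 0" for i
    using that nz multinomial_pmf_eq_0[of i k x p n] by auto
  ultimately show ?thesis
    using pv unfolding V_stat_def prob_vec_def by (intro KL_div_nonneg) auto
qed

lemma V_stat_one: "prob_vec 1 p \<Longrightarrow> x \<in> count_vecs n 1 \<Longrightarrow> V_stat n 1 p x = 0"
  unfolding prob_vec_def V_stat_def KL_div_def by (cases "n = 0") (auto dest: count_vecs_sum)

lemma sum_kl_term_renormalise:
  assumes x: "x \<in> count_vecs m k" and m: "0 < m" and n: "0 < n" and c: "0 < c"
    and support: "\<And>i. i < k \<Longrightarrow> x i \<noteq> 0 \<Longrightarrow> 0 < p i"
  shows "(\<Sum>i<k. kl_term (real (x i)) (real n * p i))
       = kl_term (real m) (real n * c) + real m * V_stat m k (\<lambda>i. p i / c) x"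
proof -
  define L where "L = ln (real m / (real n * c))"
  have rebase: "kl_term (real (x i)) (real n * p i) = kl_term (real (x i)) (real m * (p i / c)) + real (x i) * L"
    if "i < k" for i
  proof (cases "x i = 0")
    case False
    have "real m * (p i / c) / (real n * p i) = real m / (real n * c)"
      using support[OF that False] n c by (simp add: field_simps)
    then show ?thesis
      using kl_term_change_base[of "real (x i)" "real n * p i" "real m * (p i / c)"]
        support[OF that False] n m c False by (simp add: L_def)
  qed simp
  have "(\<Sum>i<k. real (x i)) = real m"
    using count_vecs_sum[OF x] by (simp flip: of_nat_sum)
  then have "(\<Sum>i<k. kl_term (real (x i)) (real n * p i))
      = (\<Sum>i<k. kl_term (real (x i)) (real m * (p i / c))) + real m * L"
    by (simp add: rebase sum.distrib flip: sum_distrib_right)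
  also have "\<dots> = real m * V_stat m k (\<lambda>i. p i / c) x + real m * L"
    using m by (simp add: n_V_stat_eq_sum_kl_term)
  finally show ?thesis using m by (simp add: kl_term_def L_def)
qed

text \<open>Chain rule for the divergence: the last category contributes a binomial term, and the
  others are renormalised by \<open>1 - p k\<close>.\<close>
lemma n_V_stat_fun_upd:
  assumes pv: "prob_vec (Suc k) p" and n: "0 < n" and j: "j \<le> n"
    and x': "x' \<in> count_vecs (n - j) k"
    and nz: "multinomial_pmf n (Suc k) p (x'(k := j)) \<noteq> 0"
  shows "real n * V_stat n (Suc k) p (x'(k := j))
       = kl_term (real j) (real n * p k) + kl_term (real (n - j)) (real n * (1 - p k))
         + real (n - j) * V_stat (n - j) k (\<lambda>i. p i / (1 - p k)) x'"
proof -
  note p = prob_vec_SucD[OF pv]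
  have support: "0 < p i" if "i < k" "x' i \<noteq> 0" for i
  proof -
    have "p i \<noteq> 0" using nz multinomial_pmf_eq_0[of i "Suc k" "x'(k := j)" p n] that by auto
    moreover have "0 \<le> p i" using p(1)[of i] that by simp
    ultimately show ?thesis by (simp add: order_less_le)
  qed
  have "real n * V_stat n (Suc k) p (x'(k := j))
      = (\<Sum>i<k. kl_term (real (x' i)) (real n * p i)) + kl_term (real j) (real n * p k)"
    using n by (simp add: n_V_stat_eq_sum_kl_term)
  moreover have "(\<Sum>i<k. kl_term (real (x' i)) (real n * p i))
      = kl_term (real (n - j)) (real n * (1 - p k)) + real (n - j) * V_stat (n - j) k (\<lambda>i. p i / (1 - p k)) x'"
  proof (cases "n - j = 0")
    case True
    then have "x' i = 0" if "i < k" for i using count_vecs_le[OF x' that] by simp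
    then show ?thesis using True by simp
  next
    case False
    obtain i0 where i0: "i0 < k" "x' i0 \<noteq> 0"
      using count_vecs_sum[OF x'] False by (metis lessThan_iff sum.neutral)
    have "p i0 \<le> (\<Sum>i<k. p i)" using p(1) i0 by (intro member_le_sum) auto
    then have c: "0 < 1 - p k" using support[OF i0] p(2) by simp
    have m: "0 < n - j" using False by simp
    show ?thesis by (rule sum_kl_term_renormalise[OF x' m n c support])
  qed
  ultimately show ?thesis by simp
qed

lemma exp_convex_combination_le:
  fixes a b u v :: real
  assumes "0 \<le> a" "0 \<le> b" "a + b = 1"
  shows "exp (a * u + b * v) \<le> a * exp u + b * exp v"
proof -
  have "exp ((1 - b) *\<^sub>R u + b *\<^sub>R v) \<le> (1 - b) * exp u + b * exp v"
    by (rule convex_onD[OF exp_convex]) (use assms in auto)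
  moreover have "1 - b = a" using assms by simp
  ultimately show ?thesis by simp
qed

text \<open>For \<open>k = 1\<close>, the divisor \<open>2 * (real k - 1)\<close> vanishes; since \<open>x / 0 = 0\<close> the
  exponent is then \<open>0\<close>, which is correct as \<open>V_stat\<close> vanishes with one category.\<close>
lemma exp_n_V_stat_fun_upd_le:
  assumes pv: "prob_vec (Suc k) p" and k: "0 < k" and n: "0 < n" and j: "j \<le> n"
    and x': "x' \<in> count_vecs (n - j) k"
    and nz: "multinomial_pmf n (Suc k) p (x'(k := j)) \<noteq> 0"
  shows "exp (real n * V_stat n (Suc k) p (x'(k := j)) / (2 * (real (Suc k) - 1)))
      \<le> 1 / real k * exp ((kl_term (real j) (real n * p k) + kl_term (real (n - j)) (real n * (1 - p k))) / 2)
        + (real k - 1) / real k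
          * exp (real (n - j) * V_stat (n - j) k (\<lambda>i. p i / (1 - p k)) x' / (2 * (real k - 1)))"
    (is "exp (?V / _) \<le> 1 / real k * exp (?T / 2) + _ * exp (?S / _)")
proof (cases "k = 1")
  case True
  have "?S = 0"
  proof (cases "n - j = 0")
    case False
    then have "x' 0 \<noteq> 0" using count_vecs_sum[OF x'] True by simp
    then have "p 0 \<noteq> 0" using nz multinomial_pmf_eq_0[of 0 "Suc k" "x'(k := j)" p n] True by auto
    then have "0 < p 0" using prob_vec_SucD(1)[OF pv, of 0] by (simp add: order.strict_iff_order)
    then have "p k < 1" using prob_vec_SucD(2)[OF pv] True by simp
    then show ?thesis using V_stat_one[of _ x' "n - j"] x' prob_vec_rescale[OF pv] True by simp
  qed simp
  then have "?V = ?T" using n_V_stat_fun_upd[OF pv n j x' nz] by linarith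
  then show ?thesis using True by simp
next
  case False
  then have k1: "0 < real k - 1" using k by simp
  have "(t + s) / (2 * (real (Suc k) - 1))
      = 1 / real k * (t / 2) + (real k - 1) / real k * (s / (2 * (real k - 1)))" for t s :: real
    using k1 by (simp add: field_simps)
  then have "?V / (2 * (real (Suc k) - 1))
      = 1 / real k * (?T / 2) + (real k - 1) / real k * (?S / (2 * (real k - 1)))"
    using n_V_stat_fun_upd[OF pv n j x' nz] by (simp only:)
  moreover have "0 \<le> 1 / real k" "0 \<le> (real k - 1) / real k" "1 / real k + (real k - 1) / real k = 1"
    using k k1 by (simp_all add: diff_divide_distrib)
  ultimately show ?thesis
    using exp_convex_combination_le[of "1 / real k" "(real k - 1) / real k" "?T / 2" "?S / (2 * (real k - 1))"]
    by (simp only:)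
qed

section \<open>The moment generating function bound\<close>

lemma sum_multinomial_pmf_exp_rescaled_le:
  assumes pv: "prob_vec (Suc k) p"
    and IH: "\<And>q. prob_vec k q \<Longrightarrow> mult_expect m k q (\<lambda>x. exp (real m * V_stat m k q x / (2 * (real k - 1)))) \<le> 2"
  shows "(\<Sum>x'\<in>count_vecs m k. multinomial_pmf m k p x'
           * exp (real m * V_stat m k (\<lambda>i. p i / (1 - p k)) x' / (2 * (real k - 1))))
         \<le> 2 * (1 - p k)^m"
proof -
  define c where "c = 1 - p k"
  define q where "q = (\<lambda>i. p i / c)"
  note p = prob_vec_SucD[OF pv]
  have c: "0 \<le> c" using p(3) by (simp add: c_def)
  have "p i = c * q i" if "i < k" for i
  proof (cases "c = 0")
    case True
    then have "(\<Sum>i<k. p i) = 0" using p(2) by (simp add: c_def)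
    then have "p i = 0" using p(1) that by (subst (asm) sum_nonneg_eq_0_iff) auto
    then show ?thesis using True by simp
  qed (simp add: q_def)
  then have pmf: "multinomial_pmf m k p x = c^m * multinomial_pmf m k q x" if "x \<in> count_vecs m k" for x
    using multinomial_pmf_cong[of k p "\<lambda>i. c * q i"] multinomial_pmf_scale[OF that] by simp
  have "(\<Sum>x'\<in>count_vecs m k. multinomial_pmf m k p x' * exp (real m * V_stat m k q x' / (2 * (real k - 1))))
      = c^m * mult_expect m k q (\<lambda>x. exp (real m * V_stat m k q x / (2 * (real k - 1))))"
    unfolding mult_expect_def sum_distrib_left by (intro sum.cong refl) (simp add: pmf mult.assoc)
  also have "\<dots> \<le> c^m * 2"
  proof (cases "c = 0")
    case True
    then show ?thesis by (cases m) (simp_all add: mult_expect_def sum_multinomial_pmf)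
  next
    case False
    then have "prob_vec k q" using prob_vec_rescale[OF pv] c unfolding q_def c_def by simp
    then show ?thesis using c by (intro mult_left_mono IH) simp_all
  qed
  finally show ?thesis by (simp add: q_def c_def mult.commute)
qed

lemma sum_fun_upd_exp_n_V_stat_le:
  assumes pv: "prob_vec (Suc k) p" and k: "0 < k" and n: "0 < n" and j: "j \<le> n"
    and IH: "\<And>q. prob_vec k q
      \<Longrightarrow> mult_expect (n - j) k q (\<lambda>x. exp (real (n - j) * V_stat (n - j) k q x / (2 * (real k - 1)))) \<le> 2"
  shows "(\<Sum>x'\<in>count_vecs (n - j) k. multinomial_pmf n (Suc k) p (x'(k := j))
           * exp (real n * V_stat n (Suc k) p (x'(k := j)) / (2 * (real (Suc k) - 1))))
      \<le> real (n choose j) * p k ^ j * (1 - p k)^(n - j)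
         * (1 / real k * exp ((kl_term (real j) (real n * p k) + kl_term (real (n - j)) (real n * (1 - p k))) / 2)
            + 2 * (real k - 1) / real k)"
    (is "_ \<le> ?w * (1 - p k)^(n - j) * (1 / real k * ?A + _)")
proof -
  define E where "E x' = exp (real (n - j) * V_stat (n - j) k (\<lambda>i. p i / (1 - p k)) x' / (2 * (real k - 1)))" for x'
  note p = prob_vec_SucD[OF pv]
  have "(\<Sum>x'\<in>count_vecs (n - j) k. multinomial_pmf n (Suc k) p (x'(k := j))
           * exp (real n * V_stat n (Suc k) p (x'(k := j)) / (2 * (real (Suc k) - 1))))
      \<le> (\<Sum>x'\<in>count_vecs (n - j) k. multinomial_pmf n (Suc k) p (x'(k := j))
           * (1 / real k * ?A + (real k - 1) / real k * E x'))"
  proof (rule sum_mono)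
    fix x' assume x': "x' \<in> count_vecs (n - j) k"
    show "multinomial_pmf n (Suc k) p (x'(k := j)) * exp (real n * V_stat n (Suc k) p (x'(k := j)) / (2 * (real (Suc k) - 1)))
        \<le> multinomial_pmf n (Suc k) p (x'(k := j)) * (1 / real k * ?A + (real k - 1) / real k * E x')"
      using exp_n_V_stat_fun_upd_le[OF pv k n j x'] multinomial_pmf_nonneg[OF p(1)]
      by (cases "multinomial_pmf n (Suc k) p (x'(k := j)) = 0") (auto simp: E_def intro: mult_left_mono)
  qed
  also have "\<dots> = ?w * (1 / real k * ?A * (\<Sum>x'\<in>count_vecs (n - j) k. multinomial_pmf (n - j) k p x')
      + (real k - 1) / real k * (\<Sum>x'\<in>count_vecs (n - j) k. multinomial_pmf (n - j) k p x' * E x'))"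
    by (simp add: multinomial_pmf_fun_upd[OF j] distrib_left sum.distrib sum_distrib_left sum_distrib_right
        sum_divide_distrib mult_ac)
  also have "\<dots> \<le> ?w * (1 / real k * ?A * (1 - p k)^(n - j) + (real k - 1) / real k * (2 * (1 - p k)^(n - j)))"
    using sum_multinomial_pmf_exp_rescaled_le[OF pv IH] p(1)[of k] p(2) k
    by (intro mult_left_mono add_mono) (simp_all add: E_def sum_multinomial_pmf)
  finally show ?thesis by (simp add: algebra_simps)
qed

lemma mgf_n_V_stat_le:
  "prob_vec k p \<Longrightarrow> mult_expect n k p (\<lambda>x. exp (real n * V_stat n k p x / (2 * (real k - 1)))) \<le> 2"
proof (induction k arbitrary: n p)
  case 0
  then show ?case by (simp add: prob_vec_def)
next
  case (Suc k)
  note pv = Suc.prems and p = prob_vec_SucD[OF Suc.prems]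
  show ?case
  proof (cases "n = 0 \<or> k = 0")
    case True
    then show ?thesis using mult_expect_const[OF pv, of n 1] by auto
  next
    case False
    then have n: "0 < n" and k: "0 < k" by auto
    define B where "B j = real (n choose j) * p k ^ j * (1 - p k)^(n - j)" for j
    define A where "A j = exp ((kl_term (real j) (real n * p k) + kl_term (real (n - j)) (real n * (1 - p k))) / 2)" for j
    have "mult_expect n (Suc k) p (\<lambda>x. exp (real n * V_stat n (Suc k) p x / (2 * (real (Suc k) - 1))))
        \<le> (\<Sum>j\<le>n. B j * (1 / real k * A j + 2 * (real k - 1) / real k))"
      unfolding mult_expect_def sum_count_vecs_Suc A_def B_def
      by (intro sum_mono sum_fun_upd_exp_n_V_stat_le[OF pv k n] Suc.IH) auto
    also have "\<dots> = 1 / real k * (\<Sum>j\<le>n. B j * A j) + 2 * (real k - 1) / real k * (\<Sum>j\<le>n. B j)"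
      by (simp add: distrib_left sum.distrib sum_distrib_left sum_distrib_right sum_divide_distrib mult_ac)
    also have "(\<Sum>j\<le>n. B j) = 1"
      using binomial_ring[of "p k" "1 - p k" n] by (simp add: B_def mult_ac)
    also have "1 / real k * (\<Sum>j\<le>n. B j * A j) \<le> 1 / real k * 2"
      using binomial_exp_kl_term_le[of "p k" n] p(1)[of k] p(3)
      unfolding A_def B_def by (intro mult_left_mono) (simp_all add: mult.assoc)
    finally show ?thesis using k by (simp add: field_simps)
  qed
qed

section \<open>Orlicz norm and moments\<close>

lemma mult_expect_exp_abs_centered_le:
  assumes pv: "prob_vec k p" and t: "0 < t"
    and Y: "\<And>x. x \<in> count_vecs n k \<Longrightarrow> multinomial_pmf n k p x \<noteq> 0 \<Longrightarrow> 0 \<le> Y x"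
    and mgf: "mult_expect n k p (\<lambda>x. exp (Y x / t)) \<le> 2"
  shows "mult_expect n k p (\<lambda>x. exp (\<bar>Y x - mult_expect n k p Y\<bar> / (2 * t))) \<le> 2"
proof -
  define \<mu> where "\<mu> = mult_expect n k p Y"
  define Z where "Z = mult_expect n k p (\<lambda>x. exp (Y x / (2 * t)))"
  have "mult_expect n k p (\<lambda>_. 0) \<le> \<mu>" unfolding \<mu>_def using Y by (rule mult_expect_mono[OF pv])
  then have \<mu>: "0 \<le> \<mu>" by (simp add: mult_expect_const[OF pv])
  have Z: "0 \<le> Z"
    using mult_expect_mono[OF pv, of n "\<lambda>_. 0" "\<lambda>x. exp (Y x / (2 * t))"]
    by (simp add: Z_def mult_expect_const[OF pv])
  \<comment> \<open>Jensen for \<open>exp\<close> bounds \<open>exp (\<mu> / (2 * t))\<close>, Jensen for the square bounds \<open>Z\<close>.\<close>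
  have "exp (\<mu> / (2 * t)) = exp (mult_expect n k p (\<lambda>x. Y x / (2 * t)))"
    using mult_expect_cmult[where c = "1 / (2 * t)" and f = Y] by (simp add: \<mu>_def)
  also have "\<dots> \<le> Z"
    unfolding Z_def using mult_expect_convex_le[OF pv exp_convex] by simp
  finally have exp_\<mu>: "exp (\<mu> / (2 * t)) \<le> Z" .
  have "Z^2 \<le> mult_expect n k p (\<lambda>x. (exp (Y x / (2 * t)))^2)"
    unfolding Z_def by (rule mult_expect_convex_le[OF pv convex_power2])
  also have "\<dots> = mult_expect n k p (\<lambda>x. exp (Y x / t))"
    by (simp add: power2_eq_square flip: exp_add)
  finally have Z2: "Z^2 \<le> 2" using mgf by simp
  have "mult_expect n k p (\<lambda>x. exp (\<bar>Y x - \<mu>\<bar> / (2 * t)))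
      \<le> mult_expect n k p (\<lambda>x. exp (\<mu> / (2 * t)) * exp (Y x / (2 * t)))"
  proof (rule mult_expect_mono[OF pv])
    fix x assume "x \<in> count_vecs n k" "multinomial_pmf n k p x \<noteq> 0"
    then have "\<bar>Y x - \<mu>\<bar> \<le> \<mu> + Y x" using Y \<mu> by fastforce
    then have "\<bar>Y x - \<mu>\<bar> / (2 * t) \<le> (\<mu> + Y x) / (2 * t)"
      using t by (intro divide_right_mono) simp_all
    then show "exp (\<bar>Y x - \<mu>\<bar> / (2 * t)) \<le> exp (\<mu> / (2 * t)) * exp (Y x / (2 * t))"
      by (simp add: add_divide_distrib flip: exp_add)
  qed
  also have "\<dots> = exp (\<mu> / (2 * t)) * Z" by (simp add: Z_def mult_expect_cmult)
  also have "\<dots> \<le> Z^2" using exp_\<mu> Z by (simp add: power2_eq_square mult_right_mono)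
  finally show ?thesis using Z2 by (simp add: \<mu>_def)
qed

lemma powr_le_exp:
  fixes y t m :: real
  assumes y: "0 \<le> y" and t: "0 < t" and m: "1 \<le> m"
  shows "y powr m \<le> (t * m) powr m * exp (- m) * exp (y / t)"
proof (cases "y = 0")
  case False
  then have y: "0 < y" using y by simp
  have m0: "0 < m" using m by simp
  then have tm: "0 < t * m" using t by simp
  have "ln (y / (t * m)) = ln y - ln (t * m)" using y t m0 by (simp add: ln_div)
  then have "m * (ln y - ln (t * m)) \<le> m * (y / (t * m) - 1)"
    using ln_le_minus_one[of "y / (t * m)"] y tm m by (intro mult_left_mono) simp_all
  moreover have "m * (y / (t * m) - 1) = y / t - m" using t m0 by (simp add: field_simps)
  ultimately have "m * ln y \<le> m * ln (t * m) + - m + y / t" by (simp add: algebra_simps)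
  then have "exp (m * ln y) \<le> exp (m * ln (t * m) + - m + y / t)" by simp
  then have "exp (m * ln y) \<le> exp (m * ln (t * m)) * exp (- m) * exp (y / t)"
    by (simp only: exp_add[symmetric])
  then show ?thesis using y t m0 by (simp add: powr_def)
qed (use t m in simp)

lemma mult_expect_powr_le:
  assumes pv: "prob_vec k p" and t: "0 < t" and m: "1 \<le> m"
    and Y: "\<And>x. x \<in> count_vecs n k \<Longrightarrow> multinomial_pmf n k p x \<noteq> 0 \<Longrightarrow> 0 \<le> Y x"
    and mgf: "mult_expect n k p (\<lambda>x. exp (Y x / t)) \<le> 2"
  shows "mult_expect n k p (\<lambda>x. Y x powr m) \<le> (t * m) powr m"
proof -
  have "mult_expect n k p (\<lambda>x. Y x powr m)
      \<le> mult_expect n k p (\<lambda>x. (t * m) powr m * exp (- m) * exp (Y x / t))"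
    using Y t m by (intro mult_expect_mono[OF pv] powr_le_exp)
  also have "\<dots> \<le> (t * m) powr m * exp (- m) * 2"
    using mgf by (simp add: mult_expect_cmult mult_left_mono)
  also have "\<dots> \<le> (t * m) powr m"
  proof -
    have "2 \<le> exp m" using exp_ge_add_one_self[of m] m by linarith
    then have "exp (- m) * 2 \<le> 1" by (simp add: exp_minus field_simps)
    then show ?thesis by (simp add: mult_left_le mult.assoc)
  qed
  finally show ?thesis .
qed

lemma psi1_norm_le:
  assumes "0 < t" "mult_expect n k p (\<lambda>x. exp (\<bar>Y x\<bar> / t)) \<le> 2"
  shows "psi1_norm n k p Y \<le> t"
  unfolding psi1_norm_def by (rule cInf_lower) (use assms in \<open>auto intro: bdd_belowI[of _ 0]\<close>)

lemma psi1_norm_eq_0: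
  assumes "prob_vec k p" "\<And>x. x \<in> count_vecs n k \<Longrightarrow> Y x = 0"
  shows "psi1_norm n k p Y = 0"
proof -
  have "mult_expect n k p (\<lambda>x. exp (\<bar>Y x\<bar> / t)) = mult_expect n k p (\<lambda>_. 1)" for t
    unfolding mult_expect_def by (rule sum.cong) (auto simp: assms(2))
  then have "{t. 0 < t \<and> mult_expect n k p (\<lambda>x. exp (\<bar>Y x\<bar> / t)) \<le> 2} = {0<..}"
    by (auto simp: mult_expect_const[OF assms(1)])
  then show ?thesis unfolding psi1_norm_def by simp
qed

lemma mult_expect_eq_0: "(\<And>x. x \<in> count_vecs n k \<Longrightarrow> f x = 0) \<Longrightarrow> mult_expect n k p f = 0"
  unfolding mult_expect_def by (rule sum.neutral) simp

lemma two_n_V_stat_nonneg: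
  "prob_vec k p \<Longrightarrow> x \<in> count_vecs n k \<Longrightarrow> multinomial_pmf n k p x \<noteq> 0
    \<Longrightarrow> 0 \<le> 2 * real n * V_stat n k p x"
  using V_stat_nonneg by simp

lemma two_n_V_stat_one:
  assumes "prob_vec 1 p"
  shows "x \<in> count_vecs n 1 \<Longrightarrow> 2 * real n * V_stat n 1 p x = 0"
    and "mult_expect n 1 p (\<lambda>y. 2 * real n * V_stat n 1 p y) = 0"
proof -
  have zero: "2 * real n * V_stat n 1 p x = 0" if "x \<in> count_vecs n 1" for x
    using V_stat_one[OF assms that] by simp
  then show "x \<in> count_vecs n 1 \<Longrightarrow> 2 * real n * V_stat n 1 p x = 0" .
  show "mult_expect n 1 p (\<lambda>y. 2 * real n * V_stat n 1 p y) = 0"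
    by (rule mult_expect_eq_0) (rule zero)
qed

lemma mgf_two_n_V_stat_le:
  assumes "prob_vec k p" "1 < k"
  shows "mult_expect n k p (\<lambda>x. exp (2 * real n * V_stat n k p x / (4 * (real k - 1)))) \<le> 2"
proof -
  have "2 * a / (4 * b) = a / (2 * b)" for a b :: real by simp
  then show ?thesis using mgf_n_V_stat_le[OF assms(1), of n] by (simp only: mult.assoc)
qed

lemma mgf_centered_two_n_V_stat_le:
  assumes pv: "prob_vec k p" and k: "1 < k"
  shows "mult_expect n k p (\<lambda>x. exp (\<bar>2 * real n * V_stat n k p x
           - mult_expect n k p (\<lambda>y. 2 * real n * V_stat n k p y)\<bar> / (8 * (real k - 1)))) \<le> 2"
proof -
  have "0 < 4 * (real k - 1)" using k by simp
  from mult_expect_exp_abs_centered_le[OF pv this two_n_V_stat_nonneg[OF pv] mgf_two_n_V_stat_le[OF pv k]]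
  show ?thesis by simp
qed

lemma psi1_norm_two_n_V_stat_le:
  assumes pv: "prob_vec k p" and k: "0 < k"
  shows "psi1_norm n k p (\<lambda>x. 2 * real n * V_stat n k p x) \<le> 4 * (real k - 1) \<and>
    psi1_norm n k p (\<lambda>x. 2 * real n * V_stat n k p x
      - mult_expect n k p (\<lambda>y. 2 * real n * V_stat n k p y)) \<le> 8 * (real k - 1)"
proof (cases "k = 1")
  case True
  then have pv1: "prob_vec 1 p" using pv by simp
  have "psi1_norm n 1 p (\<lambda>x. 2 * real n * V_stat n 1 p x) = 0"
    by (rule psi1_norm_eq_0[OF pv1]) (rule two_n_V_stat_one(1)[OF pv1])
  moreover have "psi1_norm n 1 p (\<lambda>x. 2 * real n * V_stat n 1 p x
      - mult_expect n 1 p (\<lambda>y. 2 * real n * V_stat n 1 p y)) = 0"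
    by (rule psi1_norm_eq_0[OF pv1]) (use two_n_V_stat_one[OF pv1] in simp)
  ultimately show ?thesis using True by simp
next
  case False
  then have k1: "1 < k" using k by simp
  have "mult_expect n k p (\<lambda>x. exp (\<bar>2 * real n * V_stat n k p x\<bar> / (4 * (real k - 1))))
      \<le> mult_expect n k p (\<lambda>x. exp (2 * real n * V_stat n k p x / (4 * (real k - 1))))"
    using two_n_V_stat_nonneg[OF pv] by (intro mult_expect_mono[OF pv]) simp
  then show ?thesis
    using mgf_two_n_V_stat_le[OF pv k1, of n] mgf_centered_two_n_V_stat_le[OF pv k1, of n] k1
    by (auto intro!: psi1_norm_le)
qed

lemma moments_two_n_V_stat_le:
  assumes pv: "prob_vec k p" and k: "0 < k" and m: "1 \<le> m"
  shows "mult_expect n k p (\<lambda>x. (2 * real n * V_stat n k p x) powr m) \<le> (4 * m * (real k - 1)) powr m \<and>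
    mult_expect n k p (\<lambda>x. \<bar>2 * real n * V_stat n k p x
      - mult_expect n k p (\<lambda>y. 2 * real n * V_stat n k p y)\<bar> powr m) \<le> (8 * m * (real k - 1)) powr m"
proof (cases "k = 1")
  case True
  then have pv1: "prob_vec 1 p" using pv by simp
  have "mult_expect n 1 p (\<lambda>x. (2 * real n * V_stat n 1 p x) powr m) = 0"
    "mult_expect n 1 p (\<lambda>x. \<bar>2 * real n * V_stat n 1 p x
      - mult_expect n 1 p (\<lambda>y. 2 * real n * V_stat n 1 p y)\<bar> powr m) = 0"
    by (rule mult_expect_eq_0, simp only: two_n_V_stat_one[OF pv1], simp)+
  then show ?thesis using True by simp
next
  case False
  then have k1: "1 < k" using k by simp
  have "0 < 4 * (real k - 1)" "0 < 8 * (real k - 1)" using k1 by simp_all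
  from mult_expect_powr_le[OF pv this(1) m two_n_V_stat_nonneg[OF pv] mgf_two_n_V_stat_le[OF pv k1]]
    mult_expect_powr_le[OF pv this(2) m _ mgf_centered_two_n_V_stat_le[OF pv k1]]
  show ?thesis by (simp add: mult_ac)
qed

theorem theorem3p2:
  shows "(\<forall>n k p. n > 0 \<and> k > 0 \<and> prob_vec k p \<longrightarrow>
            psi1_norm n k p (\<lambda>x. 2 * real n * V_stat n k p x) \<le> 4 * (real k - 1) \<and>
            psi1_norm n k p (\<lambda>x. 2 * real n * V_stat n k p x
                 - mult_expect n k p (\<lambda>y. 2 * real n * V_stat n k p y)) \<le> 8 * (real k - 1))
       \<and> (\<exists>C1 C2. C1 > 0 \<and> C2 > 0 \<and>
            (\<forall>n k p (m::real). n > 0 \<and> k > 0 \<and> prob_vec k p \<and> m \<ge> 1 \<longrightarrow>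
               mult_expect n k p (\<lambda>x. (2 * real n * V_stat n k p x) powr m)
                 \<le> (C1 * m * (real k - 1)) powr m \<and>
               mult_expect n k p (\<lambda>x. \<bar>2 * real n * V_stat n k p x
                 - mult_expect n k p (\<lambda>y. 2 * real n * V_stat n k p y)\<bar> powr m)
                 \<le> (C2 * m * (real k - 1)) powr m))"
  using psi1_norm_two_n_V_stat_le moments_two_n_V_stat_le
  by (intro conjI exI[of _ 4] exI[of _ 8]) auto

end
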